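(* Let $m$ be an integer. (i) If $m=N_2(1+(x-1)^5h(x))$ for some $h\in\mathbb Z[x]$ with $3\nmid h(1)$, then there is $F\in\mathbb Z[x]$ with $F(1)=N_1(F)=N_3(F)=3$, $N_2(F)=3m$ and $M_{27}(F)=3^4m$. (ii) If $m=N_3(1+(x-1)^5h(x))$ for some $h\in\mathbb Z[x]$ with $3\nmid h(1)$, then there is $F\in\mathbb Z[x]$ with $F(1)=N_1(F)=N_2(F)=3$, $N_3(F)=3m$ and $M_{27}(F)=3^4m$.
   Context: $M_{27}(F)=\prod_{z^{27}=1}F(z)$. For $k\geq1$, $\omega_k=e^{2\pi i/3^k}$ and $N_k(F)=\prod_{1\leq \ell\leq 3^k,\ 3\nmid \ell}F(\omega_k^\ell)$. *)

theory Defs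
  imports "HOL-Complex_Analysis.Complex_Analysis" "HOL-Computational_Algebra.Polynomial"
begin

definition cpoly :: "int poly \<Rightarrow> complex \<Rightarrow> complex" where
  "cpoly F z = poly (map_poly of_int F) z"

definition omega :: "nat \<Rightarrow> complex" where
  "omega k = exp (2 * pi * \<i> / of_nat (3 ^ k))"

definition Nk :: "nat \<Rightarrow> int poly \<Rightarrow> complex" where
  "Nk k F = (\<Prod>l \<in> {l. 1 \<le> l \<and> l \<le> 3 ^ k \<and> \<not> 3 dvd l}. cpoly F (omega k ^ l))"

definition M27 :: "int poly \<Rightarrow> complex" where
  "M27 F = (\<Prod>z \<in> {z::complex. z ^ 27 = 1}. cpoly F z)"

end

theory Submission
  imports Defs
begin

text \<open>
  Let j be the level whose norm has to become 3 m, and a, b the two other levels; write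
  G = 1 + (x - 1)^5 h and Phi_k for the 3^k-th cyclotomic polynomial. We take
  F = (1 - x) u G + Phi_j K with N_j(u) = 1. Modulo Phi_j this is (1 - x) u G, so
  N_j(F) = N_j(1 - x) N_j(G) = 3 m. The polynomial K is chosen with K(1) = 1, giving F(1) = 3,
  and such that modulo Phi_a and modulo Phi_b the polynomial F is 1 - x times a polynomial of
  norm 1; then N_a(F) = N_b(F) = 3 and M_27(F) = F(1) N_1(F) N_2(F) N_3(F) = 3^4 m.
  Since 3 (x - 1)^6 and (x - 1)^9 lie in the ideal generated by Phi_j and (x - 1) Phi_a Phi_b,
  suitable u and K depend only on the class of h modulo (3, (x - 1)^3). There are 18 classes
  with h(1) prime to 3, and for each of them an explicit choice is verified by polynomial
  arithmetic.
\<close>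

declare One_nat_def [simp del] \<comment> \<open>keeps \<open>omega 1\<close> from turning into \<open>omega (Suc 0)\<close>\<close>

lemma cpoly_pCons [simp]: "cpoly (pCons a p) z = of_int a + z * cpoly p z"
  by (simp add: cpoly_def map_poly_pCons)

lemma cpoly_0 [simp]: "cpoly 0 z = 0"
  by (simp add: cpoly_def)

lemma cpoly_1 [simp]: "cpoly 1 z = 1"
  by (simp add: cpoly_def)

lemma cpoly_add [simp]: "cpoly (p + q) z = cpoly p z + cpoly q z"
proof (induction p arbitrary: q)
  case (pCons a p)
  then show ?case
    by (cases q) (simp add: algebra_simps)
qed simp

lemma cpoly_smult [simp]: "cpoly (smult c p) z = of_int c * cpoly p z"
  by (induction p) (simp_all add: algebra_simps)

lemma cpoly_mult [simp]: "cpoly (p * q) z = cpoly p z * cpoly q z"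
  by (induction p) (simp_all add: algebra_simps)

lemma cpoly_uminus [simp]: "cpoly (- p) z = - cpoly p z"
  using cpoly_smult[of "-1" p z] by simp

lemma cpoly_power [simp]: "cpoly (p ^ n) z = cpoly p z ^ n"
  by (induction n) simp_all

lemma cpoly_monom [simp]: "cpoly (monom c n) z = of_int c * z ^ n"
  by (simp add: cpoly_def map_poly_monom poly_monom)

lemma cpoly_of_int: "cpoly p (of_int x) = of_int (poly p x)"
  by (induction p) simp_all

definition prim_exps :: "nat \<Rightarrow> nat set" where
  "prim_exps k = {l. 1 \<le> l \<and> l \<le> 3 ^ k \<and> \<not> 3 dvd l}"

lemma Nk_eq_prod_prim_exps: "Nk k F = (\<Prod>l\<in>prim_exps k. cpoly F (omega k ^ l))"
  by (simp add: Nk_def prim_exps_def)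

lemma finite_prim_exps [simp]: "finite (prim_exps k)"
  unfolding prim_exps_def by (rule finite_subset[of _ "{..3 ^ k}"]) auto

lemma prim_exps_not_dvd: "l \<in> prim_exps k \<Longrightarrow> \<not> 3 dvd l"
  by (simp add: prim_exps_def)

lemma prim_exps_less: "1 \<le> k \<Longrightarrow> l \<in> prim_exps k \<Longrightarrow> l < 3 ^ k"
  unfolding prim_exps_def by (auto simp: le_less dvd_power)

lemma prim_exps_1: "prim_exps 1 = {1, 2}"
  unfolding prim_exps_def by (auto; presburger)

lemma omega_power: "omega k ^ j = exp (2 * of_real pi * \<i> * of_nat j / of_nat (3 ^ k))"
  unfolding omega_def by (simp add: exp_of_nat_mult[symmetric] mult_ac)

lemma omega_power_eq_1_iff: "omega k ^ j = 1 \<longleftrightarrow> 3 ^ k dvd j"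
  unfolding omega_power by (rule complex_root_unity_eq_1) simp

lemma omega_power_mod: "omega k ^ (j mod 3 ^ k) = omega k ^ j"
proof -
  have "omega k ^ j = (omega k ^ 3 ^ k) ^ (j div 3 ^ k) * omega k ^ (j mod 3 ^ k)"
    by (metis div_mult_mod_eq power_add power_mult mult.commute)
  moreover have "omega k ^ 3 ^ k = 1"
    by (simp add: omega_power_eq_1_iff)
  ultimately show ?thesis
    by simp
qed

lemma omega_0: "omega 0 = 1"
  by (simp add: omega_def)

lemma omega_Suc_cube: "omega (Suc k) ^ 3 = omega k"
proof -
  have "omega (Suc k) ^ 3 = exp (of_nat 3 * (2 * of_real pi * \<i> / of_nat (3 ^ Suc k)))"
    unfolding omega_def by (subst exp_of_nat_mult) simp
  also have "of_nat 3 * (2 * of_real pi * \<i> / of_nat (3 ^ Suc k)) =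
      (2 * of_real pi * \<i> / of_nat (3 ^ k) :: complex)"
    by (simp add: field_simps)
  finally show ?thesis
    by (simp add: omega_def)
qed

lemma omega_add_power: "omega (k + i) ^ 3 ^ i = omega k"
proof (induction i)
  case (Suc i)
  have "omega (k + Suc i) ^ 3 ^ Suc i = (omega (Suc (k + i)) ^ 3) ^ 3 ^ i"
    by (simp add: power_mult[symmetric] mult.commute)
  then show ?case
    using Suc by (simp add: omega_Suc_cube)
qed simp

lemma omega_1_cube: "omega 1 ^ 3 = 1"
  by (simp add: omega_power_eq_1_iff)

lemma omega_1_power_sum: "\<not> 3 dvd l \<Longrightarrow> 1 + omega 1 ^ l + (omega 1 ^ l) ^ 2 = 0"
proof -
  assume l: "\<not> 3 dvd l"
  define y where "y = omega 1 ^ l"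
  have "y ^ 3 = 1"
    unfolding y_def by (metis omega_1_cube power_mult mult.commute power_one)
  then have "(y - 1) * (1 + y + y ^ 2) = 0"
    by (simp add: algebra_simps power2_eq_square power3_eq_cube)
  moreover have "y \<noteq> 1"
    using l by (simp add: y_def omega_power_eq_1_iff)
  ultimately show ?thesis
    by (simp add: y_def)
qed

lemma omega_1_sum: "1 + omega 1 + omega 1 ^ 2 = 0"
  using omega_1_power_sum[of 1] by simp

lemma prod_lessThan_3: "(\<Prod>b<(3::nat). f b) = f 0 * f 1 * (f 2 :: 'a :: comm_monoid_mult)"
  by (simp add: numeral_3_eq_3 numeral_2_eq_2 lessThan_Suc One_nat_def mult_ac)

lemma one_minus_cube_factor: "(1 - y) * (1 - y * omega 1) * (1 - y * omega 1 ^ 2) = 1 - y ^ 3"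
  using omega_1_sum omega_1_cube by algebra

lemma prim_exps_Suc_intro:
  assumes "1 \<le> k" and a: "a \<in> prim_exps k" and "b < 3"
  shows "a + b * 3 ^ k \<in> prim_exps (Suc k)"
proof -
  have "b * 3 ^ k \<le> 2 * 3 ^ k"
    using \<open>b < 3\<close> by simp
  then have "a + b * 3 ^ k < 3 ^ Suc k"
    using prim_exps_less[OF assms(1) a] unfolding power_Suc by linarith
  moreover have "\<not> 3 dvd a + b * 3 ^ k"
    using a assms(1) by (simp add: prim_exps_def dvd_add_left_iff dvd_power)
  ultimately show ?thesis
    using a by (simp add: prim_exps_def)
qed

lemma prim_exps_Suc_mod:
  assumes "1 \<le> k" and "l \<in> prim_exps (Suc k)"
  shows "l mod 3 ^ k \<in> prim_exps k"
proof -
  have "\<not> 3 dvd l mod 3 ^ k"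
    using assms by (simp add: prim_exps_def dvd_mod_iff dvd_power)
  moreover from this have "l mod 3 ^ k \<noteq> 0"
    by (metis dvd_0_right)
  moreover have "l mod 3 ^ k \<le> 3 ^ k"
    by (simp add: less_imp_le)
  ultimately show ?thesis
    by (simp add: prim_exps_def)
qed

lemma bij_betw_prim_exps_Suc:
  assumes "1 \<le> k"
  shows "bij_betw (\<lambda>(a, b). a + b * 3 ^ k) (prim_exps k \<times> {..<3}) (prim_exps (Suc k))"
proof (rule bij_betw_byWitness[where f' = "\<lambda>l. (l mod 3 ^ k, l div 3 ^ k)"])
  show "\<forall>x\<in>prim_exps k \<times> {..<3}. (\<lambda>l. (l mod 3 ^ k, l div 3 ^ k)) ((\<lambda>(a, b). a + b * 3 ^ k) x) = x"
    using prim_exps_less[OF assms] by fastforce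
  show "\<forall>l\<in>prim_exps (Suc k). (\<lambda>(a, b). a + b * 3 ^ k) (l mod 3 ^ k, l div 3 ^ k) = l"
    by (simp only: case_prod_conv mod_div_mult_eq) simp
  show "(\<lambda>(a, b). a + b * 3 ^ k) ` (prim_exps k \<times> {..<3}) \<subseteq> prim_exps (Suc k)"
    using prim_exps_Suc_intro[OF assms] by auto
  show "(\<lambda>l. (l mod 3 ^ k, l div 3 ^ k)) ` prim_exps (Suc k) \<subseteq> prim_exps k \<times> {..<3}"
    using prim_exps_Suc_mod[OF assms] prim_exps_less[of "Suc k"]
    by (auto simp: less_mult_imp_div_less)
qed

lemma card_prim_exps: "1 \<le> k \<Longrightarrow> card (prim_exps k) = 2 * 3 ^ (k - 1)"
proof (induction k rule: dec_induct)
  case base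
  then show ?case
    by (simp add: prim_exps_1)
next
  case (step k)
  then have "card (prim_exps (Suc k)) = 3 * card (prim_exps k)"
    using bij_betw_same_card[OF bij_betw_prim_exps_Suc[of k]] by (simp add: card_cartesian_product)
  with step show ?case
    by (cases k) simp_all
qed

lemma Nk_Suc:
  assumes "1 \<le> k"
  shows "Nk (Suc k) p = (\<Prod>a\<in>prim_exps k. \<Prod>b<3. cpoly p (omega (Suc k) ^ a * omega 1 ^ b))"
proof -
  have omega_shift: "omega (Suc k) ^ (a + b * 3 ^ k) = omega (Suc k) ^ a * omega 1 ^ b" for a b
  proof -
    have "omega (Suc k) ^ 3 ^ k = omega 1"
      by (metis Suc_eq_plus1_left omega_add_power)
    then show ?thesis
      by (simp add: power_add power_mult mult.commute[of b])
  qed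
  have "Nk (Suc k) p =
      (\<Prod>x\<in>prim_exps k \<times> {..<3}. cpoly p (omega (Suc k) ^ ((\<lambda>(a, b). a + b * 3 ^ k) x)))"
    unfolding Nk_eq_prod_prim_exps
    by (rule prod.reindex_bij_betw[OF bij_betw_prim_exps_Suc[OF assms], symmetric])
  then show ?thesis
    by (simp add: prod.cartesian_product split_def omega_shift)
qed

lemma Nk_mult: "Nk k (p * q) = Nk k p * Nk k q"
  by (simp add: Nk_def prod.distrib)

lemma Nk_one [simp]: "Nk k 1 = 1"
  by (simp add: Nk_def)

lemma Nk_power: "Nk k (p ^ n) = Nk k p ^ n"
  by (induction n) (simp_all add: Nk_mult)

lemma Nk_uminus:
  assumes "1 \<le> k"
  shows "Nk k (- p) = Nk k p"
proof -
  have "Nk k (- p) = (\<Prod>l\<in>prim_exps k. -1 * cpoly p (omega k ^ l))"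
    by (simp add: Nk_eq_prod_prim_exps)
  also have "\<dots> = (-1) ^ card (prim_exps k) * Nk k p"
    by (subst prod.distrib) (simp add: Nk_eq_prod_prim_exps)
  finally have "Nk k (- p) = (-1) ^ card (prim_exps k) * Nk k p" .
  then show ?thesis
    using card_prim_exps[OF assms] by simp
qed

lemma Nk_one_minus_x:
  assumes "1 \<le> k"
  shows "Nk k [:1, -1:] = 3"
  using assms
proof (induction k rule: dec_induct)
  case base
  have "Nk 1 [:1, -1:] = 2 - (1 + omega 1 + omega 1 ^ 2) + omega 1 ^ 3"
    by (simp add: Nk_eq_prod_prim_exps prim_exps_1 algebra_simps power2_eq_square power3_eq_cube)
  then show ?case
    using omega_1_sum omega_1_cube by algebra
next
  case (step k)
  have "Nk (Suc k) [:1, -1:] = (\<Prod>a\<in>prim_exps k. \<Prod>b<3. 1 - omega (Suc k) ^ a * omega 1 ^ b)"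
    by (simp add: Nk_Suc[OF step(1)] mult.commute)
  also have "\<dots> = (\<Prod>a\<in>prim_exps k. 1 - (omega (Suc k) ^ 3) ^ a)"
  proof (rule prod.cong[OF refl])
    fix a
    have "(\<Prod>b<3. 1 - omega (Suc k) ^ a * omega 1 ^ b) = 1 - (omega (Suc k) ^ a) ^ 3"
      unfolding prod_lessThan_3 power_0 power_one_right mult_1_right
      by (rule one_minus_cube_factor)
    then show "(\<Prod>b<3. 1 - omega (Suc k) ^ a * omega 1 ^ b) = 1 - (omega (Suc k) ^ 3) ^ a"
      by (simp only: power_mult[symmetric] mult.commute)
  qed
  finally show ?case
    using step by (simp add: omega_Suc_cube Nk_eq_prod_prim_exps)
qed

lemma Nk_1_eq: "Nk 1 p = cpoly p (omega 1) * cpoly p (omega 1 ^ 2)"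
  by (simp add: Nk_eq_prod_prim_exps prim_exps_1)

lemma Nk_1_monom: "Nk 1 (monom c n) = of_int c ^ 2"
proof -
  have "Nk 1 (monom c n) = of_int c ^ 2 * (omega 1 ^ 3) ^ n"
    by (simp add: Nk_1_eq power_mult_distrib[symmetric] power2_eq_square power3_eq_cube
        power_mult[symmetric] mult_ac)
  then show ?thesis
    by (simp add: omega_1_cube)
qed

lemma mult_mod_cancel_left:
  fixes m n x y :: nat
  assumes "coprime m n" and "n * x mod m = n * y mod m" and "x < m" and "y < m"
  shows "x = y"
proof -
  have "int n * int x mod int m = int n * int y mod int m"
    using assms(2) by (metis of_nat_mult zmod_int)
  then have "int m dvd int n * (int x - int y)"
    by (simp add: mod_eq_dvd_iff right_diff_distrib)
  with assms(1) have "int m dvd int x - int y"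
    by (simp add: coprime_dvd_mult_right_iff)
  then have "int x mod int m = int y mod int m"
    by (simp add: mod_eq_dvd_iff)
  with assms(3,4) show ?thesis
    by (simp flip: zmod_int)
qed

lemma bij_betw_mult_mod_prim_exps:
  assumes "1 \<le> k" and "\<not> 3 dvd n"
  shows "bij_betw (\<lambda>l. n * l mod 3 ^ k) (prim_exps k) (prim_exps k)"
proof -
  have three_dvd: "3 dvd (3::nat) ^ k"
    using assms(1) by (simp add: dvd_power)
  have "coprime 3 n"
    using assms(2) by (simp add: prime_imp_coprime)
  then have coprime: "coprime (3 ^ k) n"
    by simp
  have into: "n * l mod 3 ^ k \<in> prim_exps k" if "l \<in> prim_exps k" for l
  proof -
    have "prime (3::nat)"
      by simp
    then have "\<not> 3 dvd n * l"
      using assms(2) prim_exps_not_dvd[OF that] by (simp add: prime_dvd_mult_iff)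
    then have "\<not> 3 dvd n * l mod 3 ^ k"
      using three_dvd by (simp add: dvd_mod_iff)
    moreover from this have "n * l mod 3 ^ k \<noteq> 0"
      by (metis dvd_0_right)
    moreover have "n * l mod 3 ^ k \<le> 3 ^ k"
      by (simp add: less_imp_le)
    ultimately show ?thesis
      by (simp add: prim_exps_def)
  qed
  have inj: "inj_on (\<lambda>l. n * l mod 3 ^ k) (prim_exps k)"
  proof (rule inj_onI)
    fix x y
    assume "x \<in> prim_exps k" "y \<in> prim_exps k" and eq: "n * x mod 3 ^ k = n * y mod 3 ^ k"
    then show "x = y"
      using mult_mod_cancel_left[OF coprime eq] prim_exps_less[OF assms(1)] by blast
  qed
  have "(\<lambda>l. n * l mod 3 ^ k) ` prim_exps k \<subseteq> prim_exps k"
    using into by (rule image_subsetI)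
  then show ?thesis
    by (simp add: bij_betw_def inj endo_inj_surj[OF finite_prim_exps _ inj])
qed

lemma prod_prim_exps_mult_reindex:
  assumes "1 \<le> k" and "\<not> 3 dvd n"
  shows "(\<Prod>l\<in>prim_exps k. f (omega k ^ (n * l))) = (\<Prod>l\<in>prim_exps k. f (omega k ^ l))"
proof -
  have "(\<Prod>l\<in>prim_exps k. f (omega k ^ l)) = (\<Prod>l\<in>prim_exps k. f (omega k ^ (n * l mod 3 ^ k)))"
    by (rule prod.reindex_bij_betw[OF bij_betw_mult_mod_prim_exps[OF assms], symmetric])
  then show ?thesis
    by (simp add: omega_power_mod)
qed

lemma Nk_repunit:
  assumes "1 \<le> k" and "\<not> 3 dvd n" and geometric: "\<And>z. cpoly p z * (z - 1) = z ^ n - 1"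
  shows "Nk k p = 1"
proof -
  have "omega k ^ l \<noteq> 1" if "l \<in> prim_exps k" for l
  proof
    assume "omega k ^ l = 1"
    then have "3 ^ k dvd l"
      by (simp add: omega_power_eq_1_iff)
    then have "3 dvd l"
      using assms(1) by (simp add: dvd_power dvd_trans[of 3 "3 ^ k"])
    then show False
      using prim_exps_not_dvd[OF that] by simp
  qed
  then have nonzero: "(\<Prod>l\<in>prim_exps k. omega k ^ l - 1) \<noteq> 0"
    by simp
  have "Nk k p * (\<Prod>l\<in>prim_exps k. omega k ^ l - 1) = (\<Prod>l\<in>prim_exps k. omega k ^ (n * l) - 1)"
    by (simp add: Nk_eq_prod_prim_exps prod.distrib[symmetric] geometric power_mult[symmetric] mult.commute)
  also have "\<dots> = (\<Prod>l\<in>prim_exps k. omega k ^ l - 1)"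
    by (rule prod_prim_exps_mult_reindex[OF assms(1,2)])
  finally show ?thesis
    using nonzero by simp
qed

lemma Nk_repunits:
  assumes "1 \<le> k"
  shows "Nk k [:1, 1:] = 1" and "Nk k [:1, 1, 1, 1:] = 1"
    and "Nk k [:1, 1, 1, 1, 1:] = 1" and "Nk k [:1, 1, 1, 1, 1, 1, 1:] = 1"
proof -
  show "Nk k [:1, 1:] = 1"
    by (rule Nk_repunit[OF assms, where n = 2]) (simp_all add: algebra_simps power_numeral_reduce)
  show "Nk k [:1, 1, 1, 1:] = 1"
    by (rule Nk_repunit[OF assms, where n = 4]) (simp_all add: algebra_simps power_numeral_reduce)
  show "Nk k [:1, 1, 1, 1, 1:] = 1"
    by (rule Nk_repunit[OF assms, where n = 5]) (simp_all add: algebra_simps power_numeral_reduce)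
  show "Nk k [:1, 1, 1, 1, 1, 1, 1:] = 1"
    by (rule Nk_repunit[OF assms, where n = 7]) (simp_all add: algebra_simps power_numeral_reduce)
qed

definition cyclotomic_pow3 :: "nat \<Rightarrow> int poly" where
  "cyclotomic_pow3 k = 1 + monom 1 (3 ^ (k - 1)) + monom 1 (2 * 3 ^ (k - 1))"

lemma poly_cyclotomic_pow3 [simp]:
  "poly (cyclotomic_pow3 k) x = 1 + x ^ 3 ^ (k - 1) + x ^ (2 * 3 ^ (k - 1))"
  by (simp add: cyclotomic_pow3_def poly_monom)

lemma cpoly_cyclotomic_pow3_prim_root:
  assumes "1 \<le> k" and "l \<in> prim_exps k"
  shows "cpoly (cyclotomic_pow3 k) (omega k ^ l) = 0"
proof -
  have "(omega k ^ l) ^ 3 ^ (k - 1) = omega 1 ^ l"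
    using omega_add_power[of 1 "k - 1"] assms(1)
    by (simp add: power_mult[symmetric] mult.commute[of l] power_mult)
  then show ?thesis
    using omega_1_power_sum[OF prim_exps_not_dvd[OF assms(2)]]
    by (simp add: cyclotomic_pow3_def power_mult mult.commute[of 2])
qed

lemma Nk_add_cyclotomic_pow3_mult:
  assumes "1 \<le> k"
  shows "Nk k (p + cyclotomic_pow3 k * q) = Nk k p"
  unfolding Nk_eq_prod_prim_exps
  by (rule prod.cong) (simp_all add: cpoly_cyclotomic_pow3_prim_root[OF assms])

lemma lessThan_3pow_Suc_split: "{..<3 ^ Suc k} = prim_exps (Suc k) \<union> (\<lambda>j. 3 * j) ` {..<3 ^ k}"
proof (intro equalityI subsetI)
  fix j :: nat
  assume j: "j \<in> {..<3 ^ Suc k}"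
  show "j \<in> prim_exps (Suc k) \<union> (\<lambda>j. 3 * j) ` {..<3 ^ k}"
  proof (cases "3 dvd j")
    case True
    then obtain i where "j = 3 * i"
      by blast
    then show ?thesis
      using j by auto
  next
    case False
    then have "1 \<le> j"
      by (cases j) auto
    then show ?thesis
      using False j by (simp add: prim_exps_def)
  qed
next
  fix j :: nat
  assume "j \<in> prim_exps (Suc k) \<union> (\<lambda>j. 3 * j) ` {..<3 ^ k}"
  then show "j \<in> {..<3 ^ Suc k}"
    using prim_exps_less[of "Suc k" j] by auto
qed

lemma prod_roots_3pow_Suc:
  "(\<Prod>j<3 ^ Suc k. f (omega (Suc k) ^ j)) =
     (\<Prod>l\<in>prim_exps (Suc k). f (omega (Suc k) ^ l)) * (\<Prod>j<3 ^ k. f (omega k ^ j))"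
proof -
  have "prim_exps (Suc k) \<inter> (\<lambda>j. 3 * j) ` {..<3 ^ k} = {}"
    by (auto simp: prim_exps_def)
  then have "(\<Prod>j<3 ^ Suc k. f (omega (Suc k) ^ j)) =
      (\<Prod>l\<in>prim_exps (Suc k). f (omega (Suc k) ^ l)) * (\<Prod>j\<in>(\<lambda>j. 3 * j) ` {..<3 ^ k}. f (omega (Suc k) ^ j))"
    unfolding lessThan_3pow_Suc_split
    by (rule prod.union_disjoint[OF finite_prim_exps finite_imageI[OF finite_lessThan]])
  also have "(\<Prod>j\<in>(\<lambda>j. 3 * j) ` {..<3 ^ k}. f (omega (Suc k) ^ j)) = (\<Prod>j<3 ^ k. f (omega k ^ j))"
    by (simp add: prod.reindex inj_on_def power_mult omega_Suc_cube)
  finally show ?thesis .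
qed

lemma prod_roots_3pow:
  "(\<Prod>j<3 ^ k. cpoly F (omega k ^ j)) = of_int (poly F 1) * (\<Prod>i = 1..k. Nk i F)"
proof (induction k)
  case 0
  then show ?case
    using cpoly_of_int[of F 1] by (simp add: omega_0)
next
  case (Suc k)
  then show ?case
    by (subst prod_roots_3pow_Suc) (simp add: Nk_eq_prod_prim_exps prod.nat_ivl_Suc' mult_ac)
qed

lemma M27_eq_prod_norms: "M27 F = of_int (poly F 1) * Nk 1 F * Nk 2 F * Nk 3 F"
proof -
  have roots: "{z::complex. z ^ 27 = 1} = (\<lambda>j. omega 3 ^ j) ` {..<27}"
    using complex_roots_unity[of 27] by (auto simp: omega_power)
  have "inj_on (\<lambda>j. omega 3 ^ j) {..<27}"
  proof (rule inj_onI)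
    fix x y :: nat
    assume "x \<in> {..<27}" and "y \<in> {..<27}" and "omega 3 ^ x = omega 3 ^ y"
    then show "x = y"
      using complex_root_unity_eq[of 27 x y] by (simp add: omega_power)
  qed
  then have "M27 F = (\<Prod>j<3 ^ 3. cpoly F (omega 3 ^ j))"
    unfolding M27_def roots by (simp add: prod.reindex)
  also have "\<dots> = of_int (poly F 1) * (\<Prod>i\<in>{1, 2, 3}. Nk i F)"
  proof -
    have "{1..3::nat} = {1, 2, 3}"
      by auto
    then show ?thesis
      by (simp only: prod_roots_3pow)
  qed
  finally show ?thesis
    by (simp add: mult_ac)
qed

text \<open>Multiples of (x - 1) Phi_a Phi_b are invisible to N_a, N_b and to evaluation at 1.\<close>

definition lifting_ideal :: "nat \<Rightarrow> nat \<Rightarrow> nat \<Rightarrow> int poly set" where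
  "lifting_ideal j a b =
     {cyclotomic_pow3 j * s + [:-1, 1:] * cyclotomic_pow3 a * cyclotomic_pow3 b * t | s t. True}"

lemma lifting_idealI:
  "p = cyclotomic_pow3 j * s + [:-1, 1:] * cyclotomic_pow3 a * cyclotomic_pow3 b * t \<Longrightarrow>
    p \<in> lifting_ideal j a b"
  unfolding lifting_ideal_def by blast

lemma lifting_ideal_add:
  assumes "p \<in> lifting_ideal j a b" and "q \<in> lifting_ideal j a b"
  shows "p + q \<in> lifting_ideal j a b"
proof -
  obtain s t s' t' where
    "p = cyclotomic_pow3 j * s + [:-1, 1:] * cyclotomic_pow3 a * cyclotomic_pow3 b * t" and
    "q = cyclotomic_pow3 j * s' + [:-1, 1:] * cyclotomic_pow3 a * cyclotomic_pow3 b * t'"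
    using assms unfolding lifting_ideal_def by blast
  then show ?thesis
    by (intro lifting_idealI[where s = "s + s'" and t = "t + t'"]) algebra
qed

lemma lifting_ideal_mult:
  assumes "p \<in> lifting_ideal j a b"
  shows "r * p \<in> lifting_ideal j a b"
proof -
  obtain s t where "p = cyclotomic_pow3 j * s + [:-1, 1:] * cyclotomic_pow3 a * cyclotomic_pow3 b * t"
    using assms unfolding lifting_ideal_def by blast
  then show ?thesis
    by (intro lifting_idealI[where s = "r * s" and t = "r * t"]) algebra
qed

definition quadratic_at_1 :: "int \<Rightarrow> int \<Rightarrow> int \<Rightarrow> int poly" where
  "quadratic_at_1 r0 r1 r2 = [:r0:] + [:r1:] * [:-1, 1:] + [:r2:] * [:-1, 1:] ^ 2"

definition norm_certificate ::
    "nat \<Rightarrow> nat \<Rightarrow> nat \<Rightarrow> int poly \<Rightarrow> int poly \<Rightarrow> int poly \<Rightarrow> int poly \<Rightarrow> int poly \<Rightarrow> int poly \<Rightarrow> int poly \<Rightarrow> bool"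
  where
  "norm_certificate j a b \<rho> u e\<^sub>a e\<^sub>b K Q\<^sub>a Q\<^sub>b \<longleftrightarrow>
     Nk j u = 1 \<and> Nk a e\<^sub>a = 1 \<and> Nk b e\<^sub>b = 1 \<and> poly K 1 = 1 \<and>
     [:1, -1:] * u * (1 + [:-1, 1:] ^ 5 * \<rho>) + cyclotomic_pow3 j * K =
       [:1, -1:] * e\<^sub>a + cyclotomic_pow3 a * Q\<^sub>a \<and>
     [:1, -1:] * u * (1 + [:-1, 1:] ^ 5 * \<rho>) + cyclotomic_pow3 j * K =
       [:1, -1:] * e\<^sub>b + cyclotomic_pow3 b * Q\<^sub>b"

lemma exists_norm_profile_of_certificate:
  assumes levels: "1 \<le> j" "1 \<le> a" "1 \<le> b"
    and cert: "norm_certificate j a b \<rho> u e\<^sub>a e\<^sub>b K Q\<^sub>a Q\<^sub>b"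
    and perturbation: "[:1, -1:] * (G - (1 + [:-1, 1:] ^ 5 * \<rho>)) \<in> lifting_ideal j a b"
  shows "\<exists>F. poly F 1 = 3 \<and> Nk a F = 3 \<and> Nk b F = 3 \<and> Nk j F = 3 * Nk j G"
proof -
  define F\<^sub>0 where "F\<^sub>0 = [:1, -1:] * u * (1 + [:-1, 1:] ^ 5 * \<rho>) + cyclotomic_pow3 j * K"
  obtain s t where st: "[:1, -1:] * (G - (1 + [:-1, 1:] ^ 5 * \<rho>)) =
      cyclotomic_pow3 j * s + [:-1, 1:] * cyclotomic_pow3 a * cyclotomic_pow3 b * t"
    using perturbation unfolding lifting_ideal_def by blast
  define F where "F = [:1, -1:] * u * G + cyclotomic_pow3 j * (K - u * s)"
  have F_eq: "F = F\<^sub>0 + [:-1, 1:] * cyclotomic_pow3 a * cyclotomic_pow3 b * (u * t)"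
    unfolding F_def F\<^sub>0_def using st by algebra
  have units: "Nk j u = 1" "Nk a e\<^sub>a = 1" "Nk b e\<^sub>b = 1" and K_1: "poly K 1 = 1"
    and F0_a: "F\<^sub>0 = [:1, -1:] * e\<^sub>a + cyclotomic_pow3 a * Q\<^sub>a"
    and F0_b: "F\<^sub>0 = [:1, -1:] * e\<^sub>b + cyclotomic_pow3 b * Q\<^sub>b"
    using cert unfolding norm_certificate_def F\<^sub>0_def by blast+
  have "F = [:1, -1:] * e\<^sub>a + cyclotomic_pow3 a * (Q\<^sub>a + [:-1, 1:] * cyclotomic_pow3 b * (u * t))"
    using F_eq F0_a by algebra
  then have "Nk a F = Nk a [:1, -1:] * Nk a e\<^sub>a"
    by (simp only: Nk_add_cyclotomic_pow3_mult[OF levels(2)] Nk_mult)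
  moreover have "F = [:1, -1:] * e\<^sub>b + cyclotomic_pow3 b * (Q\<^sub>b + [:-1, 1:] * cyclotomic_pow3 a * (u * t))"
    using F_eq F0_b by algebra
  then have "Nk b F = Nk b [:1, -1:] * Nk b e\<^sub>b"
    by (simp only: Nk_add_cyclotomic_pow3_mult[OF levels(3)] Nk_mult)
  moreover have "Nk j F = Nk j [:1, -1:] * Nk j u * Nk j G"
    unfolding F_def by (simp only: Nk_add_cyclotomic_pow3_mult[OF levels(1)] Nk_mult)
  moreover have "poly F 1 = 3"
    using K_1 by (simp add: F_eq F\<^sub>0_def)
  ultimately have "poly F 1 = 3 \<and> Nk a F = 3 \<and> Nk b F = 3 \<and> Nk j F = 3 * Nk j G"
    using units by (simp add: Nk_one_minus_x levels)
  then show ?thesis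
    by blast
qed

lemma perturbation_in_lifting_ideal:
  assumes "3 * [:-1, 1:] ^ 6 \<in> lifting_ideal j a b" and "[:-1, 1:] ^ 9 \<in> lifting_ideal j a b"
    and "h = \<rho> + 3 * \<alpha> + [:-1, 1:] ^ 3 * \<beta>"
  shows "[:1, -1:] * ((1 + [:-1, 1:] ^ 5 * h) - (1 + [:-1, 1:] ^ 5 * \<rho>)) \<in> lifting_ideal j a b"
proof -
  have "[:1, -1:] * ((1 + [:-1, 1:] ^ 5 * h) - (1 + [:-1, 1:] ^ 5 * \<rho>)) =
      (- \<alpha>) * (3 * [:-1, 1:] ^ 6) + (- \<beta>) * [:-1, 1:] ^ 9"
  proof -
    define X :: "int poly" where "X = [:-1, 1:]"
    have "[:1, -1:] = - X"
      by (simp add: X_def)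
    then show ?thesis
      using assms(3) unfolding X_def[symmetric] by algebra
  qed
  then show ?thesis
    using assms(1,2) by (simp only: lifting_ideal_add lifting_ideal_mult)
qed

lemma quadratic_at_1_mod_3:
  "quadratic_at_1 c0 c1 c2 =
     quadratic_at_1 (c0 mod 3) (c1 mod 3) (c2 mod 3) + 3 * quadratic_at_1 (c0 div 3) (c1 div 3) (c2 div 3)"
proof -
  have const: "[:c mod 3:] + 3 * [:c div 3:] = [:c:]" for c :: int
    by (rule poly_eq_poly_eq_iff[THEN iffD1]) (simp add: fun_eq_iff)
  have "quadratic_at_1 c0 c1 c2 =
      ([:c0 mod 3:] + 3 * [:c0 div 3:]) + ([:c1 mod 3:] + 3 * [:c1 div 3:]) * [:-1, 1:]
        + ([:c2 mod 3:] + 3 * [:c2 div 3:]) * [:-1, 1:] ^ 2"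
    unfolding quadratic_at_1_def const ..
  then show ?thesis
    unfolding quadratic_at_1_def by algebra
qed

lemma int_mod_3_cases: "(c :: int) mod 3 \<in> {0, 1, 2}"
  by simp presburger

lemma taylor_decomposition_mod_3:
  fixes h :: "int poly"
  assumes "\<not> 3 dvd poly h 1"
  obtains r0 r1 r2 \<alpha> \<beta> where "r0 \<in> {1, 2}" "r1 \<in> {0, 1, 2}" "r2 \<in> {0, 1, 2}"
    and "h = quadratic_at_1 r0 r1 r2 + 3 * \<alpha> + [:-1, 1:] ^ 3 * \<beta>"
proof -
  define q1 where "q1 = synthetic_div h 1"
  define q2 where "q2 = synthetic_div q1 1"
  define q3 where "q3 = synthetic_div q2 1"
  have "h = [:-1, 1:] * q1 + [:poly h 1:]" "q1 = [:-1, 1:] * q2 + [:poly q1 1:]"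
    "q2 = [:-1, 1:] * q3 + [:poly q2 1:]"
    unfolding q1_def q2_def q3_def by (rule synthetic_div_correct'[symmetric])+
  then have "h = quadratic_at_1 (poly h 1) (poly q1 1) (poly q2 1) + [:-1, 1:] ^ 3 * q3"
    unfolding quadratic_at_1_def by algebra
  then have "h = quadratic_at_1 (poly h 1 mod 3) (poly q1 1 mod 3) (poly q2 1 mod 3)
      + 3 * quadratic_at_1 (poly h 1 div 3) (poly q1 1 div 3) (poly q2 1 div 3) + [:-1, 1:] ^ 3 * q3"
    by (simp only: quadratic_at_1_mod_3[of "poly h 1" "poly q1 1" "poly q2 1"])
  moreover have "poly h 1 mod 3 \<in> {1, 2}"
    using assms int_mod_3_cases[of "poly h 1"] by auto
  ultimately show ?thesis
    using that int_mod_3_cases by blast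
qed

lemma exists_norm_profile:
  assumes levels: "1 \<le> j" "1 \<le> a" "1 \<le> b"
    and ideal: "3 * [:-1, 1:] ^ 6 \<in> lifting_ideal j a b" "[:-1, 1:] ^ 9 \<in> lifting_ideal j a b"
    and certificates: "\<And>r0 r1 r2. r0 \<in> {1, 2} \<Longrightarrow> r1 \<in> {0, 1, 2} \<Longrightarrow> r2 \<in> {0, 1, 2} \<Longrightarrow>
      \<exists>u e\<^sub>a e\<^sub>b K Q\<^sub>a Q\<^sub>b. norm_certificate j a b (quadratic_at_1 r0 r1 r2) u e\<^sub>a e\<^sub>b K Q\<^sub>a Q\<^sub>b"
    and h_1: "\<not> 3 dvd poly h 1"
  shows "\<exists>F. poly F 1 = 3 \<and> Nk a F = 3 \<and> Nk b F = 3 \<and> Nk j F = 3 * Nk j (1 + [:-1, 1:] ^ 5 * h)"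
proof -
  obtain r0 r1 r2 \<alpha> \<beta> where r: "r0 \<in> {1, 2}" "r1 \<in> {0, 1, 2}" "r2 \<in> {0, 1, 2}"
    and h: "h = quadratic_at_1 r0 r1 r2 + 3 * \<alpha> + [:-1, 1:] ^ 3 * \<beta>"
    using taylor_decomposition_mod_3[OF h_1] by blast
  obtain u e\<^sub>a e\<^sub>b K Q\<^sub>a Q\<^sub>b where "norm_certificate j a b (quadratic_at_1 r0 r1 r2) u e\<^sub>a e\<^sub>b K Q\<^sub>a Q\<^sub>b"
    using certificates[OF r] by blast
  then show ?thesis
    using perturbation_in_lifting_ideal[OF ideal h] by (rule exists_norm_profile_of_certificate[OF levels])
qed

text \<open>The polynomials below were found by a computer search.\<close>

lemma lifting_ideal_level_2:
  shows "3 * [:-1, 1:] ^ 6 \<in> lifting_ideal 2 1 3" and "[:-1, 1:] ^ 9 \<in> lifting_ideal 2 1 3"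
proof -
  show "3 * [:-1, 1:] ^ 6 \<in> lifting_ideal 2 1 3"
    by (rule lifting_idealI[where
        s = "[:-4, -9, 33, -42, 42, -42, 42, -30, 12, -7, -3, 18, -21, 21, -21, 21, -15, 6, -7, 3, 3:]" and
        t = "[:-7, 9, -12, 7, -3, -3:]"],
      rule poly_eq_poly_eq_iff[THEN iffD1], simp add: fun_eq_iff, algebra)
  show "[:-1, 1:] ^ 9 \<in> lifting_ideal 2 1 3"
    by (rule lifting_idealI[where
        s = "[:-1, -3, -15, 57, -90, 108, -112, 108, -90, 56, -30, 3, 28, -45, 54, -56, 54, -45, 28, -21, 12:]" and
        t = "[:0, -12, 21, -28, 21, -12:]"],
      rule poly_eq_poly_eq_iff[THEN iffD1], simp add: fun_eq_iff, algebra)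
qed

lemma norm_certificates_level_2:
  "norm_certificate 2 1 3 (quadratic_at_1 1 0 0) 1 (monom 1 1) ([:1, 1, 1, 1, 1, 1, 1:] ^ 3)
     [:-1, 0, 14, -10, 17, -11, 16, -11, 1, -7, -4, 3, -9, 5, -7, 8, -4, 2, -3, 1, 1:]
     [:-1, 5, -4, 8, -2, 3, 3, 0, 1, -2, 3, -8, 5, -7, -1, 0, -2, 0, -2, 4, -6, 7, -4, 0, 1:]
     [:-2, 3, -4, 5, -3, 3, -3, 1, 1:]"
  "norm_certificate 2 1 3 (quadratic_at_1 1 0 1) [:1, 1, 1, 1, 1, 1, 1:] (monom 1 1) ([:1, 1, 1, 1, 1, 1, 1:] ^ 4)
     [:7, -13, 37, -40, 65, -32, 61, -14, 34, -16, 16, -24, -14, -19, -21, -3, -20, 6, -10, 7, -6:]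
     [:6, -8, 9, 11, -8, 24, 5, 11, 11, 14, -3, 7, 5, -22, 5, -16, -12, -11, -4, -17, 0, 4, -17, 13, -6:]
     [:5, -4, 0, 2, -3, 6, -7, 8, -6:]"
  "norm_certificate 2 1 3 (quadratic_at_1 1 0 2) [:1, 1, 1, 1:] (monom 1 1) ([:1, 1, 1, 1:] * [:1, 1, 1, 1, 1, 1, 1:] ^ 3)
     [:-21, 8, 35, -30, 69, -37, 40, 11, -33, 25, -62, 49, -54, 25, -33, 11, 2, -15, 5, -13, 19:]
     [:-23, 49, -42, 22, 24, -24, 27, 7, 6, -21, 47, -49, 13, 10, -40, 12, -7, -4, -27, 45, -47, 18, 18, -32, 19:]
     [:-24, 24, -23, 19, -10, 4, 5, -13, 19:]"
  "norm_certificate 2 1 3 (quadratic_at_1 1 1 0) 1 (monom 1 1) 1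
     [:1, -1, -3, 10, -14, 14, -14, 14, -10, 5, -2, -1, 5, -7, 7, -7, 7, -5, 3, -2, 1:]
     [:2, -6, 8, -6, 3, -1, 1, -2, 2, 1, -5, 7, -6, 4, -2, 1, -1, 1, 1, -4, 6, -6, 5, -3, 1:]
     [:1, -2, 3, -4, 5, -4, 3, -2, 1:]"
  "norm_certificate 2 1 3 (quadratic_at_1 1 1 1) [:1, 1, 1, 1, 1, 1, 1:] (monom 1 1) [:1, 1, 1, 1, 1, 1, 1:]
     [:4, -8, 17, -28, 31, -30, 26, -20, 15, -11, 12, -9, 2, 0, -2, 5, -7, 7, -4, 5, -4:]
     [:4, -7, 5, 3, -10, 10, -4, -2, 2, 3, -7, 5, 3, -10, 10, -4, -1, 1, 3, -6, 4, 3, -9, 9, -4:]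
     [:3, -2, 1, 1, -2, 3, -4, 5, -4:]"
  "norm_certificate 2 1 3 (quadratic_at_1 1 1 2) [:1, 1, 1, 1:] (monom 1 1) [:1, 1, 1, 1:]
     [:-16, 6, 19, -29, 43, -40, 24, 0, -24, 24, -37, 48, -33, 28, -21, 12, 0, -12, 3, -9, 15:]
     [:-17, 35, -35, 15, 10, -22, 15, -2, 2, -18, 35, -35, 15, 11, -23, 15, -1, 1, -18, 36, -36, 15, 12, -24, 15:]
     [:-18, 19, -18, 15, -9, 3, 3, -9, 15:]"
  "norm_certificate 2 1 3 (quadratic_at_1 1 2 0) 1 (monom 1 1) ([:1, 1, 1, 1:] ^ 3)
     [:4, 3, -15, 36, -43, 40, -46, 34, -26, 13, 0, -5, 19, -21, 20, -23, 17, -13, 9, -4, 2:]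
     [:6, -13, 20, -17, 12, -6, 1, -3, 1, 5, -15, 19, -18, 12, -5, 2, -1, 1, 5, -14, 18, -18, 13, -6, 2:]
     [:5, -8, 9, -14, 13, -11, 9, -4, 2:]"
  "norm_certificate 2 1 3 (quadratic_at_1 1 2 1) [:1, 1, 1, 1, 1, 1, 1:] (monom 1 1) ([:1, 1, 1, 1, 1, 1, 1:] * [:1, 1, 1, 1:] ^ 3)
     [:3, 5, 10, 2, 16, -9, 7, -16, -3, -12, -3, -7, 3, 3, 4, 3, -1, 1, -3, 0, -2:]
     [:4, 0, 6, 4, 1, 6, 0, -1, -1, 0, -7, -2, -3, -6, 2, -2, -1, 1, 3, -2, 2, 0, -3, 2, -2:]
     [:3, 2, 3, 0, -1, -1, -3, 0, -2:]"
  "norm_certificate 2 1 3 (quadratic_at_1 1 2 2) [:1, 1, 1, 1:] (monom 1 1) ([:1, 1, 1, 1:] ^ 4)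
     [:-8, 12, 15, -13, 33, -30, 15, -15, -26, 9, -24, 39, -18, 27, -13, 9, -7, -13, 0, -4, 13:]
     [:-8, 26, -24, 17, 7, -15, 12, -5, -3, -12, 21, -28, 13, 3, -16, 13, -1, 1, -9, 24, -28, 13, 4, -17, 13:]
     [:-9, 16, -13, 9, -11, 0, 0, -4, 13:]"
  "norm_certificate 2 1 3 (quadratic_at_1 2 0 0) (- 1) (monom (- 1) 2) (- 1)
     [:3, 6, -22, 28, -28, 28, -28, 20, -8, 5, 2, -12, 14, -14, 14, -14, 10, -4, 5, -2, -2:]
     [:4, -9, 14, -15, 9, 0, -4, 2, 0, 3, -9, 14, -14, 8, 0, -3, 1, 0, 4, -10, 14, -13, 7, 0, -2:]
     [:5, -6, 8, -9, 8, -6, 5, -2, -2:]"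
  "norm_certificate 2 1 3 (quadratic_at_1 2 0 1) [:1, 1, 1, 1, 1:] (monom (- 1) 1) [:1, 1, 1, 1, 1:]
     [:9, -18, 37, -54, 49, -47, 53, -58, 54, -38, 31, -18, -4, 13, -20, 26, -29, 27, -16, 15, -11:]
     [:7, -7, -5, 22, -31, 24, -9, 0, -2, 8, -7, -5, 22, -31, 25, -10, 0, -1, 7, -7, -4, 21, -31, 26, -11:]
     [:6, -1, -4, 10, -14, 16, -16, 15, -11:]"
  "norm_certificate 2 1 3 (quadratic_at_1 2 0 2) [:1, 1:] (monom (- 1) 1) [:1, 1:]
     [:-12, -12, 49, -46, 28, -8, 0, 16, -40, 32, -32, 39, -24, 14, -4, 0, 8, -20, 8, -10, 15:]
     [:-15, 28, -24, 4, 18, -27, 17, 0, -2, -14, 28, -23, 3, 18, -26, 16, 0, -1, -15, 28, -22, 2, 18, -25, 15:]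
     [:-16, 12, -9, 8, -2, -5, 8, -10, 15:]"
  "norm_certificate 2 1 3 (quadratic_at_1 2 1 0) (- 1) (monom (- 1) 2) (- ([:1, 1, 1, 1:] ^ 3))
     [:0, 2, -10, 2, 1, 2, 4, 0, 8, -3, 0, -8, 0, 0, 1, 2, 0, 4, -1, 0, -3:]
     [:0, -2, 2, -4, 0, 5, -4, 3, 1, -1, 1, 2, -2, 0, 3, -4, 1, 0, 0, 0, 2, -1, -1, 3, -3:]
     [:1, 0, 2, 1, 0, 1, -1, 0, -3:]"
  "norm_certificate 2 1 3 (quadratic_at_1 2 1 1) [:1, 1, 1, 1, 1:] (monom (- 1) 1) ([:1, 1, 1, 1, 1:] * [:1, 1, 1, 1:] ^ 3)
     [:10, -6, 31, -30, 36, -31, 31, -47, 23, -34, 18, -9, 3, 14, -8, 18, -22, 12, -13, 10, -5:]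
     [:9, -3, -2, 20, -18, 16, -4, -2, -6, 5, -9, -7, 15, -23, 14, -4, 0, -1, 9, -6, -4, 15, -23, 15, -5:]
     [:8, 2, -1, 5, -12, 7, -13, 10, -5:]"
  "norm_certificate 2 1 3 (quadratic_at_1 2 1 2) [:1, 1:] (monom (- 1) 1) ([:1, 1:] * [:1, 1, 1, 1:] ^ 3)
     [:-8, -5, 41, -33, 25, -11, -6, 4, -36, 25, -22, 37, -15, 14, -5, -3, 2, -18, 7, -6, 14:]
     [:-10, 24, -19, 6, 15, -23, 13, -2, -4, -10, 21, -21, 4, 13, -21, 15, 0, -1, -10, 21, -20, 3, 13, -20, 14:]
     [:-11, 10, -9, 4, -4, -4, 7, -6, 14:]"
  "norm_certificate 2 1 3 (quadratic_at_1 2 2 0) (- 1) (monom (- 1) 2) (- ([:1, 1, 1, 1, 1, 1, 1:] ^ 3))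
     [:-2, 0, 3, -24, 25, -31, 26, -27, 23, -5, 8, 5, -8, 16, -14, 13, -15, 10, -5, 5, -2:]
     [:-3, 6, -11, 8, -12, 6, -6, 0, 1, -4, 9, -8, 12, -7, 9, -2, 2, 1, -3, 8, -11, 11, -10, 7, -2:]
     [:-2, 5, -6, 8, -10, 8, -5, 5, -2:]"
  "norm_certificate 2 1 3 (quadratic_at_1 2 2 1) [:1, 1, 1, 1, 1:] (monom (- 1) 1) ([:1, 1, 1, 1, 1:] * [:1, 1, 1, 1, 1, 1, 1:] ^ 3)
     [:3, -4, 16, -5, 31, -1, 32, -7, 22, -18, 0, -22, -15, -11, -16, 2, -11, 9, -5, 5, -4:]
     [:3, -1, 2, 12, -2, 16, 6, 10, 6, 8, -1, -3, 2, -17, -1, -13, -8, -8, -2, -7, -2, 6, -10, 9, -4:]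
     [:2, -2, -1, 3, -3, 6, -5, 5, -4:]"
  "norm_certificate 2 1 3 (quadratic_at_1 2 2 2) [:1, 1:] (monom (- 1) 1) ([:1, 1:] * [:1, 1, 1, 1, 1, 1, 1:] ^ 3)
     [:-7, -1, 30, -19, 27, -2, 5, 9, -24, 11, -28, 16, -19, 6, -6, 1, 6, -9, 4, -7, 8:]
     [:-8, 20, -14, 6, 16, -12, 13, 4, -1, -8, 17, -19, -1, 7, -20, 6, -2, -3, -9, 17, -15, 3, 11, -15, 8:]
     [:-9, 8, -6, 5, -1, -1, 4, -7, 8:]"
  unfolding norm_certificate_def quadratic_at_1_def poly_eq_poly_eq_iff[symmetric] fun_eq_iff
  by ((simp only: Nk_mult Nk_power Nk_uminus one_le_numeral)?;
      simp add: Nk_repunits Nk_1_monom poly_monom; intro conjI allI; algebra)+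

lemma exists_norm_profile_level_2:
  assumes "\<not> 3 dvd poly h 1"
  shows "\<exists>F. poly F 1 = 3 \<and> Nk 1 F = 3 \<and> Nk 3 F = 3 \<and> Nk 2 F = 3 * Nk 2 (1 + [:-1, 1:] ^ 5 * h)"
  using norm_certificates_level_2
  by (intro exists_norm_profile[OF _ _ _ lifting_ideal_level_2 _ assms]) (auto, blast+)

lemma lifting_ideal_level_3:
  shows "3 * [:-1, 1:] ^ 6 \<in> lifting_ideal 3 1 2" and "[:-1, 1:] ^ 9 \<in> lifting_ideal 3 1 2"
proof -
  show "3 * [:-1, 1:] ^ 6 \<in> lifting_ideal 3 1 2"
    by (rule lifting_idealI[where
        s = "[:1, -6, 15, -20, 15, -6, 1:]" and
        t = "[:-2, 12, -30, 40, -30, 12, -2, 0, 0, -1, 6, -15, 20, -15, 6, -1:]"],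
      rule poly_eq_poly_eq_iff[THEN iffD1], simp add: fun_eq_iff, algebra)
  show "[:-1, 1:] ^ 9 \<in> lifting_ideal 3 1 2"
    by (rule lifting_idealI[where
        s = "[:0, 3, -12, 28, -42, 42, -28, 12, -3:]" and
        t = "[:1, -6, 24, -56, 84, -84, 56, -24, 6, 0, -3, 12, -28, 42, -42, 28, -12, 3:]"],
      rule poly_eq_poly_eq_iff[THEN iffD1], simp add: fun_eq_iff, algebra)
qed

lemma norm_certificates_level_3:
  "norm_certificate 3 1 2 (quadratic_at_1 1 0 0) (- 1) (monom (- 1) 2) (- 1)
     [:0, 2, -5, 7, -5, 2:]
     [:0, -3, 14, -25, 21, 0, -20, 20, 0, -20, 22, -7, -8, 10, 0, -10, 10, 0, -10, 12, -7, 2:]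
     [:1, -4, 10, -14, 14, -14, 14, -10, 4, 0, -2, 5, -7, 7, -7, 7, -5, 2:]"
  "norm_certificate 3 1 2 (quadratic_at_1 1 0 1) [:1, 1:] (monom (- 1) 1) [:1, 1:]
     [:1, -4, 10, -11, 3, 8, -11, 7, -2:]
     [:0, 9, -30, 43, -19, -39, 80, -55, -20, 75, -59, -6, 54, -45, -1, 35, -27, -10, 38, -32, 4, 17, -18, 9, -2:]
     [:-1, 8, -19, 23, -14, 4, 0, -8, 20, -23, 18, -14, 12, -7, 2, 0, -4, 10, -11, 7, -2:]"
  "norm_certificate 3 1 2 (quadratic_at_1 1 0 2) [:1, 1, 1, 1, 1:] (monom (- 1) 1) [:1, 1, 1, 1, 1:]
     [:-24, 8, 13, -26, 25, -15, 11, -18, 27:]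
     [:-26, 54, -68, 68, -50, 12, 16, 8, -77, 120, -78, -15, 65, -25, -55, 91, -54, -10, 40, -22, -5, 1, 29, -45, 27:]
     [:-27, 27, -39, 81, -77, 70, -76, 86, -84, 46, -44, 41, 2, -17, 28, -37, 43, -42, 11, -18, 27:]"
  "norm_certificate 3 1 2 (quadratic_at_1 1 1 0) (- 1) (monom (- 1) 2) (- ([:1, 1, 1, 1:] ^ 3))
     [:1, -1, 1, -6, 6, -5, 3, 1, 1:]
     [:0, 1, -5, 12, -21, 19, -1, -16, 18, -1, -18, 20, -8, -6, 9, 0, -8, 9, 0, -10, 11, -7, 2, 0, 1:]
     [:1, 3, -2, 12, -15, 12, -18, 10, -12, 5, 3, 1, 7, -7, 6, -9, 5, -6, 3, 1, 1:]"
  "norm_certificate 3 1 2 (quadratic_at_1 1 1 1) [:1, 1:] (monom (- 1) 1) ([:1, 1:] * [:1, 1, 1, 1:] ^ 3)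
     [:-1, -2, 7, -4, 5, 4, -7, 3, -4:]
     [:-1, 6, -15, 24, -13, -16, 41, -37, -2, 37, -37, 7, 26, -28, 6, 15, -18, -1, 18, -19, 8, 7, -10, 7, -4:]
     [:-2, 1, -14, 10, -11, 7, 6, 4, 16, -13, 8, -15, 3, -7, 3, 3, 2, 8, -7, 3, -4:]"
  "norm_certificate 3 1 2 (quadratic_at_1 1 1 2) [:1, 1, 1, 1, 1:] (monom (- 1) 1) ([:1, 1, 1, 1, 1:] * [:1, 1, 1, 1:] ^ 3)
     [:-23, 5, 7, -18, 23, -9, 11, -13, 18:]
     [:-24, 43, -50, 49, -36, 16, 5, 5, -52, 84, -64, 0, 44, -21, -32, 64, -45, -1, 23, -17, 1, -2, 24, -31, 18:]
     [:-25, 15, -36, 57, -64, 54, -54, 75, -53, 45, -31, 29, -5, -18, 16, -29, 36, -27, 11, -13, 18:]"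
  "norm_certificate 3 1 2 (quadratic_at_1 1 2 0) (- 1) (monom (- 1) 2) (- ([:1, 1, 1, 1, 1, 1, 1:] ^ 3))
     [:1, -3, 9, -16, 19, -12, 4, -1:]
     [:-1, 7, -23, 49, -62, 37, 16, -52, 36, 17, -56, 48, -8, -21, 17, 8, -26, 18, 9, -30, 30, -16, 5, -1:]
     [:0, 8, -15, 38, -39, 45, -40, 37, -27, 4, -2, -12, 15, -23, 21, -20, 20, -12, 4, -1:]"
  "norm_certificate 3 1 2 (quadratic_at_1 1 2 1) [:1, 1:] (monom (- 1) 1) ([:1, 1:] * [:1, 1, 1, 1, 1, 1, 1:] ^ 3)
     [:0, 0, 1, -2, 2, -2, -1, 4, -1:]
     [:1, 0, -3, 6, -10, 7, 7, -19, 16, 2, -18, 17, -1, -14, 13, 0, -9, 8, 1, -9, 9, -2, -5, 5, -1:]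
     [:0, -3, -6, -4, -13, -2, -5, -1, 4, 4, 14, 3, 7, 1, 4, -1, -2, -1, -1, 4, -1:]"
  "norm_certificate 3 1 2 (quadratic_at_1 1 2 2) [:1, 1, 1, 1, 1:] (monom (- 1) 1) ([:1, 1, 1, 1, 1:] * [:1, 1, 1, 1, 1, 1, 1:] ^ 3)
     [:-14, 9, 4, -13, 14, -11, 6, -8, 14:]
     [:-14, 31, -36, 32, -27, 15, -1, 2, -27, 56, -51, 11, 25, -22, -14, 42, -36, 8, 14, -13, 3, -3, 14, -22, 14:]
     [:-15, 13, -24, 32, -59, 24, -55, 35, -52, 32, -13, 39, 13, 7, 24, -13, 25, -24, 6, -8, 14:]"
  "norm_certificate 3 1 2 (quadratic_at_1 2 0 0) 1 (monom 1 1) ([:1, 1, 1, 1:] ^ 3)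
     [:0, -3, 11, -12, 11, -4, 0, -1, -1:]
     [:-1, 8, -25, 45, -39, 2, 35, -38, 2, 36, -41, 16, 13, -18, 1, 17, -19, 1, 18, -22, 15, -5, 1, 0, -1:]
     [:-2, 6, -22, 26, -27, 30, -24, 24, -6, 0, 1, -13, 12, -14, 15, -12, 12, -3, 0, -1, -1:]"
  "norm_certificate 3 1 2 (quadratic_at_1 2 0 1) [:1, 1, 1, 1:] (monom 1 1) ([:1, 1, 1, 1:] ^ 4)
     [:5, -10, 14, -16, 18, 1, -10, 17, -18:]
     [:3, 3, -32, 68, -61, 0, 85, -122, 64, 40, -107, 80, 11, -73, 63, 0, -46, 28, 23, -61, 52, -7, -27, 35, -18:]
     [:2, 4, -33, 27, -40, 31, -9, 3, 38, -25, 44, -50, 21, -28, 13, -6, 1, 19, -10, 17, -18:]"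
  "norm_certificate 3 1 2 (quadratic_at_1 2 0 2) [:1, 1, 1, 1, 1, 1, 1:] (monom 1 1) ([:1, 1, 1, 1, 1, 1, 1:] * [:1, 1, 1, 1:] ^ 3)
     [:-21, 20, -8, -16, 23, -12, 7, 0, 8:]
     [:-24, 67, -112, 119, -64, -23, 80, -52, -44, 137, -163, 98, 5, -66, 47, 26, -73, 55, -3, -32, 27, -11, 7, -8, 8:]
     [:-25, 41, -76, 89, -110, 96, -81, 69, -36, 38, -19, 24, -5, -3, 4, -23, 23, -20, 7, 0, 8:]"
  "norm_certificate 3 1 2 (quadratic_at_1 2 1 0) 1 (monom 1 1) ([:1, 1, 1, 1, 1, 1, 1:] ^ 3)
     [:0, -1, 3, -2, -2, 3, -1, 1:]
     [:0, 2, -7, 8, 2, -16, 18, -2, -16, 18, -3, -12, 13, -3, -7, 9, -1, -8, 9, -2, -4, 4, -2, 1:]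
     [:-1, 1, -9, 0, -3, -3, -2, -3, 9, 1, 6, 0, 4, 2, 0, -1, -3, 3, -1, 1:]"
  "norm_certificate 3 1 2 (quadratic_at_1 2 1 1) [:1, 1, 1, 1:] (monom 1 1) ([:1, 1, 1, 1:] * [:1, 1, 1, 1, 1, 1, 1:] ^ 3)
     [:7, -5, 9, -12, 9, -3, -7, 12, -9:]
     [:6, -1, -21, 45, -44, 2, 55, -79, 45, 24, -68, 52, 4, -47, 40, 0, -28, 19, 16, -40, 33, -5, -19, 21, -9:]
     [:5, 3, -23, 8, -37, 8, -22, -11, 15, -12, 41, -15, 30, -5, 18, -2, -2, 6, -7, 12, -9:]"
  "norm_certificate 3 1 2 (quadratic_at_1 2 1 2) [:1, 1, 1, 1, 1, 1, 1:] (monom 1 1) ([:1, 1, 1, 1, 1, 1, 1:] ^ 4)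
     [:-15, 18, -5, -10, 17, -13, 4, -1, 6:]
     [:-17, 52, -86, 94, -56, -13, 60, -44, -28, 104, -128, 84, -4, -50, 39, 15, -55, 46, -6, -22, 23, -11, 5, -7, 6:]
     [:-18, 33, -58, 68, -96, 62, -87, 34, -49, 20, -16, 29, 12, 19, 23, -2, 27, -13, 7, 0, 6:]"
  "norm_certificate 3 1 2 (quadratic_at_1 2 2 0) 1 (monom 1 1) 1
     [:0, 1, -4, 10, -13, 10, -4, 1:]
     [:1, -4, 12, -28, 43, -35, 0, 34, -34, 0, 35, -39, 14, 12, -16, 0, 17, -17, 0, 18, -22, 14, -5, 1:]
     [:0, -1, 8, -20, 28, -28, 28, -28, 20, -8, 1, 4, -10, 14, -14, 14, -14, 10, -4, 1:]"
  "norm_certificate 3 1 2 (quadratic_at_1 2 2 1) [:1, 1, 1, 1:] (monom 1 1) [:1, 1, 1, 1:]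
     [:4, -3, 4, -5, 5, -2, -2, 5, -5:]
     [:4, -3, -7, 20, -23, 7, 20, -36, 26, 3, -27, 27, -5, -17, 20, -5, -10, 10, 4, -17, 17, -5, -7, 10, -5:]
     [:3, 2, -7, 7, -11, 11, -6, 0, 6, -8, 13, -14, 9, -8, 6, -3, 0, 3, -2, 5, -5:]"
  "norm_certificate 3 1 2 (quadratic_at_1 2 2 2) [:1, 1, 1, 1, 1, 1, 1:] (monom 1 1) [:1, 1, 1, 1, 1, 1, 1:]
     [:-10, 13, -6, -6, 13, -10, 4, -1, 4:]
     [:-11, 35, -61, 70, -46, -2, 40, -36, -12, 70, -95, 69, -12, -32, 32, 4, -37, 37, -10, -14, 18, -10, 5, -5, 4:]
     [:-12, 25, -38, 56, -62, 60, -52, 40, -30, 18, -15, 14, -4, 0, 4, -10, 14, -14, 4, -1, 4:]"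
  unfolding norm_certificate_def quadratic_at_1_def poly_eq_poly_eq_iff[symmetric] fun_eq_iff
  by ((simp only: Nk_mult Nk_power Nk_uminus one_le_numeral)?;
      simp add: Nk_repunits Nk_1_monom poly_monom; intro conjI allI; algebra)+

lemma exists_norm_profile_level_3:
  assumes "\<not> 3 dvd poly h 1"
  shows "\<exists>F. poly F 1 = 3 \<and> Nk 1 F = 3 \<and> Nk 2 F = 3 \<and> Nk 3 F = 3 * Nk 3 (1 + [:-1, 1:] ^ 5 * h)"
  using norm_certificates_level_3
  by (intro exists_norm_profile[OF _ _ _ lifting_ideal_level_3 _ assms]) (auto, blast+)

theorem lemma4p5:
  fixes m :: int
  shows "((\<exists>h :: int poly. \<not> 3 dvd poly h 1 \<and>
              of_int m = Nk 2 (1 + [:-1, 1:] ^ 5 * h)) \<longrightarrow>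
          (\<exists>F :: int poly. poly F 1 = 3 \<and> Nk 1 F = 3 \<and> Nk 3 F = 3 \<and>
              Nk 2 F = of_int (3 * m) \<and> M27 F = of_int (3 ^ 4 * m)))
       \<and> ((\<exists>h :: int poly. \<not> 3 dvd poly h 1 \<and>
              of_int m = Nk 3 (1 + [:-1, 1:] ^ 5 * h)) \<longrightarrow>
          (\<exists>F :: int poly. poly F 1 = 3 \<and> Nk 1 F = 3 \<and> Nk 2 F = 3 \<and>
              Nk 3 F = of_int (3 * m) \<and> M27 F = of_int (3 ^ 4 * m)))"
proof (intro conjI impI)
  assume "\<exists>h :: int poly. \<not> 3 dvd poly h 1 \<and> of_int m = Nk 2 (1 + [:-1, 1:] ^ 5 * h)"
  then obtain h where "\<not> 3 dvd poly h 1" and m: "of_int m = Nk 2 (1 + [:-1, 1:] ^ 5 * h)"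
    by blast
  then obtain F where F: "poly F 1 = 3" "Nk 1 F = 3" "Nk 3 F = 3" "Nk 2 F = 3 * of_int m"
    using exists_norm_profile_level_2 by metis
  then have "M27 F = of_int (3 ^ 4 * m)"
    by (simp add: M27_eq_prod_norms)
  with F show "\<exists>F. poly F 1 = 3 \<and> Nk 1 F = 3 \<and> Nk 3 F = 3 \<and>
      Nk 2 F = of_int (3 * m) \<and> M27 F = of_int (3 ^ 4 * m)"
    by auto
next
  assume "\<exists>h :: int poly. \<not> 3 dvd poly h 1 \<and> of_int m = Nk 3 (1 + [:-1, 1:] ^ 5 * h)"
  then obtain h where "\<not> 3 dvd poly h 1" and m: "of_int m = Nk 3 (1 + [:-1, 1:] ^ 5 * h)"
    by blast
  then obtain F where F: "poly F 1 = 3" "Nk 1 F = 3" "Nk 2 F = 3" "Nk 3 F = 3 * of_int m"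
    using exists_norm_profile_level_3 by metis
  then have "M27 F = of_int (3 ^ 4 * m)"
    by (simp add: M27_eq_prod_norms)
  with F show "\<exists>F. poly F 1 = 3 \<and> Nk 1 F = 3 \<and> Nk 2 F = 3 \<and>
      Nk 3 F = of_int (3 * m) \<and> M27 F = of_int (3 ^ 4 * m)"
    by auto
qed

end
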